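(* Let $k\geq 2$ and let $H$ be a complete $k$-partite graph of order $mk$ (so $m=|H|/k$). Let $\beta,M,\Delta\geq 1$ satisfy $M\geq 60\beta\geq 240\Delta$, $M\geq 10\beta\Delta$, $M\geq 4k$ and $\beta\geq 10\log k$. Let $G$ be a graph such that $\overline{G}$ is $H$-free and $|G|\geq Mmk\log k$. Then there exist a subgraph $H'\sqsubseteq H$ induced by some collection of at least two parts of $H$, and an induced subgraph $F\subseteq G$, such that: (1) $\overline{F}$ is $H'$-free; (2) $M|H'|\log\chi(H')-m(H')\leq |F|\leq M|H'|\log\chi(H')$; (3) $F$ is $(\Delta,\beta,m(H'),\chi(H'))$-expanding.
   Context: All logarithms are natural. For a graph $G$, $|G|$ is its number of vertices and $\overline{G}$ its complement; "$\overline{G}$ is $H$-free" means $\overline{G}$ contains no copy of $H$. For a complete multipartite graph $H$, $H'\sqsubseteq H$ means $H'$ is the subgraph of $H$ induced by the union of some (not necessarily proper) subcollection of the parts of $H$. For a graph $H'$, $m(H')=|H'|/\chi(H')$. For a vertex set $S\subseteq V(G)$, the external neighbourhood is $N_G(S)=\{w\in V(G)\setminus S: vw\in E(G)\text{ for some }v\in S\}$. A graph $G$ $(\Delta,\beta,d,k)$-expands into a set $W\subseteq V(G)$ if (a) $|N_G(S)\cap W|\geq\Delta|S|$ for every $S\subseteq V(G)$ with $|S|\leq\beta d$, and (b) $|N_G(S)|\geq |S|/(10\log k)$ for every $S\subseteq V(G)$ with $\beta d\leq|S|\leq|G|/2$. "$G$ is $(\Delta,\beta,d,k)$-expanding" means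 $G$ $(\Delta,\beta,d,k)$-expands into $W=V(G)$. *)

theory Defs
  imports Complex_Main
begin

definition graph :: "'a set \<Rightarrow> ('a \<Rightarrow> 'a \<Rightarrow> bool) \<Rightarrow> bool" where
  "graph V E \<longleftrightarrow> finite V \<and> (\<forall>x y. E x y \<longrightarrow> x \<in> V \<and> y \<in> V \<and> x \<noteq> y \<and> E y x)"

definition compl_edges :: "'a set \<Rightarrow> ('a \<Rightarrow> 'a \<Rightarrow> bool) \<Rightarrow> 'a \<Rightarrow> 'a \<Rightarrow> bool" where
  "compl_edges V E x y \<longleftrightarrow> x \<in> V \<and> y \<in> V \<and> x \<noteq> y \<and> \<not> E x y"

definition induced_edges :: "'a set \<Rightarrow> ('a \<Rightarrow> 'a \<Rightarrow> bool) \<Rightarrow> 'a \<Rightarrow> 'a \<Rightarrow> bool" where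
  "induced_edges U E x y \<longleftrightarrow> x \<in> U \<and> y \<in> U \<and> E x y"

definition contains_copy ::
  "'a set \<Rightarrow> ('a \<Rightarrow> 'a \<Rightarrow> bool) \<Rightarrow> 'b set \<Rightarrow> ('b \<Rightarrow> 'b \<Rightarrow> bool) \<Rightarrow> bool" where
  "contains_copy V E VH EH \<longleftrightarrow>
     (\<exists>f. inj_on f VH \<and> f ` VH \<subseteq> V \<and> (\<forall>x\<in>VH. \<forall>y\<in>VH. EH x y \<longrightarrow> E (f x) (f y)))"

definition H_free ::
  "'a set \<Rightarrow> ('a \<Rightarrow> 'a \<Rightarrow> bool) \<Rightarrow> 'b set \<Rightarrow> ('b \<Rightarrow> 'b \<Rightarrow> bool) \<Rightarrow> bool" where
  "H_free V E VH EH \<longleftrightarrow> \<not> contains_copy V E VH EH"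

definition chromatic_number :: "'a set \<Rightarrow> ('a \<Rightarrow> 'a \<Rightarrow> bool) \<Rightarrow> nat" where
  "chromatic_number V E = (LEAST c. \<exists>col :: 'a \<Rightarrow> nat. (\<forall>v\<in>V. col v < c) \<and>
       (\<forall>x\<in>V. \<forall>y\<in>V. E x y \<longrightarrow> col x \<noteq> col y))"

definition mratio :: "'a set \<Rightarrow> ('a \<Rightarrow> 'a \<Rightarrow> bool) \<Rightarrow> real" where
  "mratio V E = real (card V) / real (chromatic_number V E)"

definition complete_multipartite :: "'a set \<Rightarrow> ('a \<Rightarrow> 'a \<Rightarrow> bool) \<Rightarrow> 'a set set \<Rightarrow> bool" where
  "complete_multipartite V E P \<longleftrightarrow> finite P \<and> V = \<Union>P \<and> {} \<notin> P \<and>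
     (\<forall>A\<in>P. \<forall>B\<in>P. A \<noteq> B \<longrightarrow> A \<inter> B = {}) \<and>
     (\<forall>x y. E x y \<longleftrightarrow> (x \<in> V \<and> y \<in> V \<and> (\<forall>A\<in>P. \<not> (x \<in> A \<and> y \<in> A))))"

definition ext_nbhd :: "'a set \<Rightarrow> ('a \<Rightarrow> 'a \<Rightarrow> bool) \<Rightarrow> 'a set \<Rightarrow> 'a set" where
  "ext_nbhd V E S = {w \<in> V - S. \<exists>v\<in>S. E v w}"

definition expands_into ::
  "'a set \<Rightarrow> ('a \<Rightarrow> 'a \<Rightarrow> bool) \<Rightarrow> real \<Rightarrow> real \<Rightarrow> real \<Rightarrow> nat \<Rightarrow> 'a set \<Rightarrow> bool" where
  "expands_into V E \<Delta> \<beta> d k W \<longleftrightarrow>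
     (\<forall>S. S \<subseteq> V \<and> real (card S) \<le> \<beta> * d \<longrightarrow>
          real (card (ext_nbhd V E S \<inter> W)) \<ge> \<Delta> * real (card S)) \<and>
     (\<forall>S. S \<subseteq> V \<and> \<beta> * d \<le> real (card S) \<and> real (card S) \<le> real (card V) / 2 \<longrightarrow>
          real (card (ext_nbhd V E S)) \<ge> real (card S) / (10 * ln (real k)))"

definition expanding ::
  "'a set \<Rightarrow> ('a \<Rightarrow> 'a \<Rightarrow> bool) \<Rightarrow> real \<Rightarrow> real \<Rightarrow> real \<Rightarrow> nat \<Rightarrow> bool" where
  "expanding V E \<Delta> \<beta> d k \<longleftrightarrow> expands_into V E \<Delta> \<beta> d k V"

end

(* Choose a family Q of at least two parts of H, with as few parts as possible, such that some set
   of at least T(Q) = M |H[Q]| ln |Q| vertices of G has an H[Q]-free complement; the whole family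
   qualifies by hypothesis. Trim that set to floor(T(Q)) vertices and delete a largest set of fewer
   than a smallest part's size of vertices with at most Delta times as many outside neighbours; the
   remainder F is the required graph, and its size is T(Q) up to m(H[Q]).
   If F had a poorly expanding small set, adding it to the deleted set would give a poorly expanding
   set Z with at least a smallest part's and at most (1 + beta) m(H[Q]) vertices. A smallest part
   embeds into Z, and by the minimality of Q the other parts embed into the vertices outside Z and
   its neighbourhood, which have no G-neighbours in Z: this is a copy of H[Q] in the complement.
   A large set S with few neighbours is handled in the same way, with the parts sorted by size and
   split into the longest prefix that fits into S by minimality and the remaining suffix, which
   logarithmic size estimates fit into the vertices outside S and its neighbourhood. *)
theory Submission
  imports Defs
begin

section \<open>Elementary estimates\<close>

lemma one_minus_inverse_le_ln: "0 < (x::real) \<Longrightarrow> 1 - 1/x \<le> ln x"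
proof -
  assume x: "0 < x"
  have "ln (1/x) \<le> 1/x - 1" using x by (intro ln_le_minus_one) simp
  thus ?thesis using x by (simp add: ln_div)
qed

lemma ln_2_ge_half: "ln (2::real) \<ge> 1/2"
  using one_minus_inverse_le_ln[of 2] by simp

lemma le_mult_ln:
  fixes x M :: real and n :: nat
  assumes "0 \<le> x" "2 \<le> M" "2 \<le> n"
  shows "x \<le> M * x * ln n"
proof -
  have "ln (2::real) \<le> ln n" using assms(3) by simp
  with ln_2_ge_half have "1/2 \<le> ln n" by linarith
  then have "2 * (1/2) \<le> M * ln n" using assms(2) by (intro mult_mono) auto
  then have "x * 1 \<le> x * (M * ln n)" using assms(1) by (intro mult_left_mono) auto
  then show ?thesis by (simp add: algebra_simps)
qed

lemma mult_ln_ratio_mono: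
  fixes j :: real assumes j: "j \<ge> 0" and ab: "0 < a" "a \<le> b"
  shows "a * (ln (j + a) - ln a) \<le> b * (ln (j + b) - ln b)"
proof (rule DERIV_nonneg_imp_increasing_open[OF ab(2)])
  fix x assume x: "a < x" "x < b"
  hence xp: "0 < x" "0 < j + x" using ab j by auto
  have "DERIV (\<lambda>x. x * (ln (j + x) - ln x)) x :> 1 * (ln (j + x) - ln x) + x * (1/(j+x) - 1/x)"
    using xp by (auto intro!: derivative_eq_intros)
  moreover have "1 * (ln (j + x) - ln x) + x * (1/(j+x) - 1/x) \<ge> 0"
  proof -
    have "ln (j + x) - ln x = ln ((j+x)/x)" using xp by (simp add: ln_div)
    also have "\<dots> \<ge> 1 - 1/((j+x)/x)" using xp by (intro one_minus_inverse_le_ln) simp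
    also have "1 - 1/((j+x)/x) = 1 - x/(j+x)" using xp by simp
    finally have "ln (j + x) - ln x \<ge> 1 - x/(j+x)" .
    moreover have "x * (1/(j+x) - 1/x) = x/(j+x) - 1" using xp by (simp add: right_diff_distrib)
    ultimately show ?thesis by simp
  qed
  ultimately show "\<exists>y. DERIV (\<lambda>x. x * (ln (j + x) - ln x)) x :> y \<and> y \<ge> 0" by blast
next
  show "continuous_on {a..b} (\<lambda>x. x * (ln (j + x) - ln x))"
    using ab j by (intro continuous_intros) auto
qed

lemma ln_le_pred_mult_ln2: "r \<ge> 1 \<Longrightarrow> ln (real r) \<le> (real r - 1) * ln 2"
proof -
  assume r: "r \<ge> 1"
  have "r - 1 < 2 ^ (r - 1)" by (rule less_exp)
  hence "r \<le> 2 ^ (r - 1)" using r by linarith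
  hence "real r \<le> 2 ^ (r - 1)" by (metis of_nat_le_iff of_nat_numeral of_nat_power)
  hence "ln (real r) \<le> ln (2 ^ (r - 1))" using r by simp
  also have "\<dots> = real (r - 1) * ln 2" by (subst ln_realpow) auto
  finally show ?thesis using r by (simp add: of_nat_diff)
qed

lemma ten_ln_2_le_seven_ln_3: "10 * ln (2::real) \<le> 7 * ln 3"
proof -
  have "ln (1024::real) \<le> ln 2187" by simp
  moreover have "ln ((2::real) ^ 10) = 10 * ln 2" by (subst ln_realpow) auto
  moreover have "ln ((3::real) ^ 7) = 7 * ln 3" by (subst ln_realpow) auto
  ultimately show ?thesis by (simp del: ln_le_cancel_iff)
qed

lemma two_part_gap:
  fixes j :: nat assumes j: "j \<ge> 1"
  shows "2 * ln ((real j + 2) / 2) - ln (real j + 1) - ln (real j + 1) / (10 * ln (real j + 2)) \<ge> 1/240"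
proof (cases "j = 1")
  case True
  have "2 * ln ((real j + 2) / 2) - ln (real j + 1) = ln ((3/2)^2 / 2)"
    using True by (simp add: ln_div ln_realpow)
  also have "\<dots> \<ge> 1/9" using one_minus_inverse_le_ln[of "9/8"] by (simp add: power_divide)
  finally have "2 * ln ((real j + 2) / 2) - ln (real j + 1) \<ge> 1/9" .
  moreover have "ln (2::real) / (10 * ln 3) \<le> 7/100"
    using ten_ln_2_le_seven_ln_3 by (simp add: divide_le_eq)
  ultimately show ?thesis using True by simp
next
  case False
  then have j2: "real j \<ge> 2" using j by simp
  have "2 * ln ((real j + 2) / 2) - ln (real j + 1) = ln (((real j + 2) / 2)^2 / (real j + 1))"
    by (simp add: ln_div ln_realpow)
  also have "\<dots> \<ge> 1 - 4 * (real j + 1) / (real j + 2)^2"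
    using one_minus_inverse_le_ln[of "((real j + 2) / 2)^2 / (real j + 1)"] by (simp add: power_divide)
  finally have A: "2 * ln ((real j + 2) / 2) - ln (real j + 1) \<ge> 1 - 4 * (real j + 1) / (real j + 2)^2" .
  have "0 \<le> (3 * real j + 2) * (real j - 2)" using j2 by simp
  then have "16 * (real j + 1) \<le> 3 * (real j + 2)^2" by (simp add: power2_eq_square algebra_simps)
  then have "4 * (real j + 1) / (real j + 2)^2 \<le> 3/4" by (simp add: divide_le_eq)
  moreover have "ln (real j + 1) / (10 * ln (real j + 2)) \<le> 1/10" by (simp add: divide_le_eq)
  ultimately show ?thesis using A by linarith
qed

lemma prefix_suffix_gap:
  fixes j r :: nat assumes j: "j \<ge> 1" and r: "r \<ge> 2"
  shows "real r * ln (real (j + r) / real r) - (1 + 1 / (10 * ln (real (j + r)))) * ln (real j + 1) \<ge> 1/240"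
proof -
  have "2 * (ln (real j + 2) - ln 2) \<le> real r * (ln (real j + real r) - ln (real r))"
    using mult_ln_ratio_mono[of "real j" 2 "real r"] r by simp
  then have "2 * ln ((real j + 2) / 2) \<le> real r * ln (real (j + r) / real r)"
    using r by (simp add: ln_div)
  moreover have "ln (real j + 1) / (10 * ln (real (j + r))) \<le> ln (real j + 1) / (10 * ln (real j + 2))"
    using r by (intro divide_left_mono) auto
  ultimately show ?thesis using two_part_gap[OF j] by (simp add: algebra_simps)
qed

lemma long_prefix_log_bound:
  fixes j r :: nat assumes r: "r \<ge> 2" and jr: "4 * r \<le> j"
  shows "(real r - 1) * ln (real (j + r)) \<ge> real r * ln (real r) + real r / 10 + 1/240"
proof -
  define x where "x = real r"
  define L where "L = ln (real (j + r))"
  have x: "x \<ge> 2" unfolding x_def using r by simp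
  have "ln (5 * x) \<le> L" unfolding L_def x_def using jr r by simp
  then have "L \<ge> ln 5 + ln x" using x by (simp add: ln_mult)
  then have "(x - 1) * L \<ge> (x - 1) * (ln 5 + ln x)" using x by (intro mult_left_mono) auto
  moreover have "ln (5/2::real) \<ge> 1 - 1/(5/2)" by (intro one_minus_inverse_le_ln) simp
  then have "ln 5 - ln (2::real) \<ge> 3/5" by (simp add: ln_div)
  then have "(x - 1) * (ln 5 - ln 2) \<ge> (x - 1) * (3/5)" using x by (intro mult_left_mono) auto
  moreover have "ln x \<le> (x - 1) * ln 2" unfolding x_def using ln_le_pred_mult_ln2 r by simp
  ultimately have "(x - 1) * L \<ge> x * ln x + x / 10 + 1/240"
    using x by (simp add: algebra_simps diff_divide_distrib)
  then show ?thesis unfolding x_def L_def .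
qed

text \<open>In the next three lemmas the parts of a graph \<open>H'\<close> are split into \<open>j\<close> parts of total
  size \<open>p\<close>, the largest of size \<open>b\<close>, followed by \<open>r\<close> parts of size at least \<open>b\<close> and total size
  \<open>R\<close>. A graph with \<open>F\<close> vertices contains a set \<open>S\<close> of size \<open>s\<close> with fewer than
  \<open>s / (10 ln (j + r))\<close> outside neighbours, and the conclusion bounds from below the number of
  vertices outside \<open>S\<close> and its neighbourhood.\<close>

lemma room_for_suffix_short_prefix:
  fixes j r :: nat and M p b R d s F :: real
  assumes j: "j \<ge> 1" and r: "r \<ge> 2" and jr: "j < 4 * r" and M: "M \<ge> 240" and p: "p \<ge> 0"
    and b: "b \<ge> 0" and bR: "real r * b \<le> R" and d: "d * real r \<le> R"
    and F: "F \<ge> M * (p + R) * ln (real (j + r)) - d"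
    and s: "s < M * (p + b) * ln (real j + 1)"
  shows "F - (1 + 1 / (10 * ln (real (j + r)))) * s \<ge> M * R * ln (real r)"
proof -
  define L where "L = ln (real (j + r))"
  define lj where "lj = ln (real j + 1)"
  define e where "e = 1 / (10 * L)"
  define q where "q = R / real r"
  have rpos: "real r > 0" using r by simp
  have bq: "b \<le> q" and dq: "d \<le> q" unfolding q_def using bR d rpos by (simp_all add: field_simps)
  have q0: "q \<ge> 0" using b bq by linarith
  have Lpos: "L > 0" unfolding L_def using j r by simp
  have e0: "e \<ge> 0" and eL: "e * L = 1/10" unfolding e_def using Lpos by auto
  have lj0: "lj \<ge> 0" and ljL: "lj \<le> L" unfolding lj_def L_def using r by auto
  have "1/10 \<le> 1 - 1 / (real (j + r) / (real j + 1))"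
    using jr r by (simp add: field_simps)
  also have "\<dots> \<le> ln (real (j + r) / (real j + 1))"
    using r by (intro one_minus_inverse_le_ln) simp
  also have "\<dots> = L - lj" unfolding L_def lj_def using r by (simp add: ln_div add_pos_nonneg)
  finally have "L - lj \<ge> 1/10" .
  moreover have "e * lj \<le> e * L" using ljL e0 by (rule mult_left_mono)
  ultimately have "(1 + e) * lj \<le> L" using eL by (simp add: algebra_simps)
  then have prefix: "M * p * (L - (1 + e) * lj) \<ge> 0" using M p by simp
  have "M * q * (1/240) \<le> M * q * (real r * (L - ln (real r)) - (1 + e) * lj)"
    using prefix_suffix_gap[OF j r] M q0 rpos
    unfolding L_def lj_def e_def by (intro mult_left_mono) (auto simp: ln_div)
  also have "\<dots> + M * R * ln (real r) = M * (R * L - (1 + e) * q * lj)"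
    unfolding q_def using rpos by (simp add: field_simps)
  also have "(1 + e) * lj * b \<le> (1 + e) * lj * q" using bq e0 lj0 by (intro mult_left_mono) auto
  then have "M * (R * L - (1 + e) * q * lj) \<le> M * (R * L - (1 + e) * b * lj)"
    using M by (intro mult_left_mono) (auto simp: algebra_simps)
  finally have suffix: "M * q / 240 + M * R * ln (real r) \<le> M * (R * L - (1 + e) * b * lj)"
    by simp
  have "240 * q \<le> M * q" using M q0 by (intro mult_right_mono) auto
  then have "d \<le> M * q / 240" using dq by simp
  moreover have "(1 + e) * s \<le> (1 + e) * (M * (p + b) * lj)"
    using s e0 unfolding lj_def by (intro mult_left_mono) auto
  ultimately show ?thesis
    using F prefix suffix unfolding e_def[symmetric] L_def[symmetric] by (simp add: algebra_simps)
qed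

lemma room_for_suffix_long_prefix:
  fixes j r :: nat and M p b R d s F :: real
  assumes r: "r \<ge> 2" and jr: "4 * r \<le> j" and M: "M \<ge> 240" and p: "p \<ge> 0"
    and b: "b \<ge> 0" and bR: "real r * b \<le> R" and d: "d \<ge> 0" "d * real r \<le> R"
    and F: "F \<ge> M * (p + R) * ln (real (j + r)) - d"
    and sF: "s \<le> F / 2" and s: "s < M * (p + b) * ln (real j + 1)"
  shows "F - (1 + 1 / (10 * ln (real (j + r)))) * s \<ge> M * R * ln (real r)"
proof -
  define L where "L = ln (real (j + r))"
  define lj where "lj = ln (real j + 1)"
  define e where "e = 1 / (10 * L)"
  define q where "q = R / real r"
  define Z where "Z = M * R * L - M * q * L - d"
  have rpos: "real r > 0" using r by simp
  have bq: "b \<le> q" and dq: "d \<le> q" unfolding q_def using bR d rpos by (simp_all add: field_simps)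
  have q0: "q \<ge> 0" using b bq by linarith
  have L2: "L \<ge> ln 2" unfolding L_def using r by simp
  moreover note ln_2_ge_half
  ultimately have e0: "e \<ge> 0" and e1: "e \<le> 1" and eL: "e * L = 1/10"
    unfolding e_def by (auto simp: divide_le_eq)
  have lj0: "lj \<ge> 0" and ljL: "lj \<le> L" unfolding lj_def L_def using r by auto
  have "(1 - e) * s \<le> (1 - e) * (M * (p + b) * lj)"
    using s e1 unfolding lj_def by (intro mult_left_mono) auto
  moreover have "e * (2 * s) \<le> e * F" using sF e0 by (intro mult_left_mono) auto
  ultimately have "F - (1 + e) * s \<ge> (1 - e) * (F - M * (p + b) * lj)"
    by (simp add: algebra_simps)
  moreover have "F - M * (p + b) * lj \<ge> Z"
  proof -
    have "M * p * lj \<le> M * p * L" using ljL M p by (intro mult_left_mono) auto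
    moreover have "M * (b * lj) \<le> M * (q * L)" using M bq ljL b lj0 by (intro mult_left_mono mult_mono) auto
    ultimately show ?thesis using F unfolding Z_def L_def by (simp add: algebra_simps)
  qed
  then have "(1 - e) * (F - M * (p + b) * lj) \<ge> (1 - e) * Z" using e1 by (intro mult_left_mono) auto
  moreover have "(1 - e) * Z \<ge> M * R * L - M * R / 10 - M * q * L - d"
  proof -
    have "e * (M * q * L + d) \<ge> 0" using e0 M q0 L2 d ln_2_ge_half by simp
    moreover have "e * (M * R * L) = M * R / 10" using eL by (metis mult.commute mult.left_commute times_divide_eq_right mult_1_right)
    moreover have "(1 - e) * Z = Z - e * (M * R * L) + e * (M * q * L + d)"
      unfolding Z_def by (simp add: algebra_simps)
    ultimately show ?thesis unfolding Z_def by linarith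
  qed
  moreover have "M * R * L - M * R / 10 - M * q * L - M * q / 240
      = M * q * ((real r - 1) * L - real r / 10 - 1/240)"
    unfolding q_def using rpos by (simp add: field_simps)
  moreover have "\<dots> \<ge> M * q * (real r * ln (real r))"
    using long_prefix_log_bound[OF r jr] M q0 unfolding L_def by (intro mult_left_mono) auto
  moreover have "M * q * (real r * ln (real r)) = M * R * ln (real r)"
    unfolding q_def using rpos by simp
  moreover have "240 * q \<le> M * q" using M q0 by (intro mult_right_mono) auto
  ultimately show ?thesis using dq unfolding e_def L_def by linarith
qed

lemma room_for_suffix:
  fixes j r :: nat and M p b R d s F :: real
  assumes j: "j \<ge> 1" and r: "r \<ge> 2" and M: "M \<ge> 240" and p: "p \<ge> 0" and b: "b \<ge> 0"
    and bR: "real r * b \<le> R" and d: "d \<ge> 0" "d * real r \<le> R"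
    and F: "F \<ge> M * (p + R) * ln (real (j + r)) - d"
    and sF: "s \<le> F / 2" and s: "s < M * (p + b) * ln (real j + 1)"
  shows "F - (1 + 1 / (10 * ln (real (j + r)))) * s \<ge> M * R * ln (real r)"
proof (cases "j < 4 * r")
  case True
  show ?thesis by (rule room_for_suffix_short_prefix[OF j r True M p b bR d(2) F s])
next
  case False
  then show ?thesis using room_for_suffix_long_prefix[OF r _ M p b bR d F sF s] by simp
qed

lemma room_for_last_part:
  fixes M h d F s L :: real
  assumes M: "M \<ge> 240" and h: "h \<ge> 0" and dh: "d \<le> h" and L: "L \<ge> ln 2"
    and F: "F \<ge> M * h * L - d" and sF: "s \<le> F / 2" and s0: "s \<ge> 0"
  shows "F - (1 + 1 / (10 * L)) * s \<ge> h"
proof -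
  have Lp: "L \<ge> 1/2" using L ln_2_ge_half by linarith
  define e where "e = 1 / (10 * L)"
  have e0: "e \<ge> 0" and e1: "e \<le> 1/5" unfolding e_def using Lp by (auto simp: divide_le_eq)
  have "(1 + e) * s \<le> (1 + e) * (F / 2)" using sF e0 by (intro mult_left_mono) auto
  also have "\<dots> \<le> (6/5) * (F / 2)" using e1 sF s0 by (intro mult_right_mono) auto
  finally have A: "(1 + e) * s \<le> 3/5 * F" by simp
  have "M * h * L \<ge> 240 * h * (1/2)" using M h Lp by (intro mult_mono) auto
  hence "F \<ge> 119 * h" using F dh by linarith
  hence "F - (1 + e) * s \<ge> h" using A h by linarith
  thus ?thesis unfolding e_def .
qed

lemma room_after_smallest_part:
  fixes c :: nat and M \<beta> \<Delta> d h a0 n0 z :: real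
  assumes c: "c \<ge> 2" and \<beta>: "\<beta> \<ge> 1" and \<Delta>: "\<Delta> \<ge> 1" and M\<beta>: "M \<ge> 60 * \<beta>"
    and \<beta>\<Delta>: "60 * \<beta> \<ge> 240 * \<Delta>" and M\<beta>\<Delta>: "M \<ge> 10 * \<beta> * \<Delta>"
    and d: "d \<ge> 1" and h: "h = real c * d" and a0: "a0 \<ge> 0"
    and n0: "n0 > M * h * ln (real c) - 1" and z: "0 \<le> z" "z \<le> (1 + \<beta>) * d"
  shows "h \<le> n0 - (1 + \<Delta>) * z" and "M * (h - a0) * ln (real c - 1) \<le> n0 - (1 + \<Delta>) * z"
proof -
  have M: "M \<ge> 240" using M\<beta> \<beta>\<Delta> \<Delta> by linarith
  have "(1 + \<Delta>) * (1 + \<beta>) \<le> M / 8"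
    using M\<beta> \<beta>\<Delta> \<Delta> M\<beta>\<Delta> by (simp add: algebra_simps)
  then have "(1 + \<Delta>) * z \<le> (M / 8) * d"
    using z \<Delta> d by (smt (verit) mult.assoc mult_left_mono mult_right_mono)
  then have lost: "(1 + \<Delta>) * z \<le> M * d / 8" by simp
  have h2: "h \<ge> 2 * d" using h c d by simp
  have "ln (real c) \<ge> ln 2" using c by simp
  then have "ln (real c) \<ge> 1 / 2" using ln_2_ge_half by linarith
  then have "M * h * ln (real c) \<ge> M * h / 2"
    using M h2 d by (simp add: mult_left_mono)
  moreover have "M * (2 * d) \<le> M * h" using M h2 by (intro mult_left_mono) auto
  moreover have "240 * h \<le> M * h" using M h2 d by (intro mult_right_mono) auto
  ultimately show "h \<le> n0 - (1 + \<Delta>) * z"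
    using n0 lost h2 d by linarith
  have "ln (real c) - ln (real c - 1) = ln (real c / (real c - 1))"
    using c by (simp add: ln_div)
  also have "\<dots> \<ge> 1 / real c"
    using one_minus_inverse_le_ln[of "real c / (real c - 1)"] c by (simp add: field_simps)
  finally have "M * h * (ln (real c) - ln (real c - 1)) \<ge> M * h * (1 / real c)"
    using M h2 d by (intro mult_left_mono) auto
  moreover have "M * h * (1 / real c) = M * d" using h c by simp
  moreover have "M * (h - a0) * ln (real c - 1) \<le> M * h * ln (real c - 1)"
    using M a0 c by (intro mult_right_mono) auto
  moreover have "M * d \<ge> 240 * 1" using M d by (intro mult_mono) auto
  ultimately show "M * (h - a0) * ln (real c - 1) \<le> n0 - (1 + \<Delta>) * z"
    using n0 lost by (simp add: algebra_simps)
qed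

lemma largest_fitting_prefix:
  fixes w :: "nat \<Rightarrow> real" and s M :: real
  assumes c: "2 \<le> c" and w0: "w 0 \<le> s" and M: "2 \<le> M" and w: "\<And>i. 0 \<le> w i"
  obtains j where "1 \<le> j" "j < c" "(\<Sum>i<j. w i) \<le> s" "M * (\<Sum>i<j. w i) * ln j \<le> s"
    "j + 1 < c \<Longrightarrow> s < M * (\<Sum>i<j + 1. w i) * ln (j + 1)"
proof -
  define fits where "fits j \<longleftrightarrow> 1 \<le> j \<and> j < c \<and> (\<Sum>i<j. w i) \<le> s \<and> M * (\<Sum>i<j. w i) * ln j \<le> s"
    for j :: nat
  have "fits 1" unfolding fits_def using c w0 w[of 0] by simp
  moreover have "\<forall>j. fits j \<longrightarrow> id j < c" unfolding fits_def by simp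
  ultimately obtain j where j: "fits j" and greatest: "\<forall>k. fits k \<longrightarrow> id k \<le> id j"
    using ex_has_greatest_nat[of fits 1 id c] by blast
  have "s < M * (\<Sum>i<j + 1. w i) * ln (j + 1)" if "j + 1 < c"
  proof -
    have "\<not> fits (j + 1)" using greatest by fastforce
    then have "\<not> ((\<Sum>i<j + 1. w i) \<le> s \<and> M * (\<Sum>i<j + 1. w i) * ln (j + 1) \<le> s)"
      unfolding fits_def using that by simp
    moreover have "(\<Sum>i<j + 1. w i) \<le> M * (\<Sum>i<j + 1. w i) * ln (j + 1)"
      using j M w unfolding fits_def by (intro le_mult_ln sum_nonneg) auto
    ultimately show ?thesis by linarith
  qed
  then show ?thesis using j unfolding fits_def by (intro that[of j]) (auto simp: add.commute)
qed

section \<open>Copies of subgraphs of \<open>H\<close> in complements\<close>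

definition compl_contains :: "'a set \<Rightarrow> ('a \<Rightarrow> 'a \<Rightarrow> bool) \<Rightarrow> 'b set set \<Rightarrow> ('b \<Rightarrow> 'b \<Rightarrow> bool) \<Rightarrow> bool"
  where "compl_contains U E Q EH \<longleftrightarrow>
    contains_copy U (compl_edges U (induced_edges U E)) (\<Union>Q) (induced_edges (\<Union>Q) EH)"

lemma compl_edges_induced_iff:
  "compl_edges U (induced_edges U E) x y \<longleftrightarrow> x \<in> U \<and> y \<in> U \<and> x \<noteq> y \<and> \<not> E x y"
  unfolding compl_edges_def induced_edges_def by auto

lemma induced_edges_all:
  assumes "\<And>x y. E x y \<Longrightarrow> x \<in> V \<and> y \<in> V"
  shows "induced_edges V E = E"
  using assms by (auto simp: induced_edges_def fun_eq_iff)

lemma compl_contains_mono: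
  assumes "U \<subseteq> U'" "compl_contains U E Q EH"
  shows "compl_contains U' E Q EH"
proof -
  have "compl_edges U (induced_edges U E) x y \<Longrightarrow> compl_edges U' (induced_edges U' E) x y" for x y
    using assms(1) unfolding compl_edges_induced_iff by auto
  then show ?thesis using assms unfolding compl_contains_def contains_copy_def by (meson order_trans)
qed

lemma compl_contains_Un:
  assumes disj: "X \<inter> Y = {}" and sub: "X \<subseteq> V" "Y \<subseteq> V"
    and no_edges: "\<And>x y. x \<in> X \<Longrightarrow> y \<in> Y \<Longrightarrow> \<not> E x y \<and> \<not> E y x"
    and X: "compl_contains X E Q1 EH" and Y: "compl_contains Y E Q2 EH"
    and parts_disj: "\<Union>Q1 \<inter> \<Union>Q2 = {}"
  shows "compl_contains V E (Q1 \<union> Q2) EH"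
proof -
  obtain f1 where f1: "inj_on f1 (\<Union>Q1)" "f1 ` \<Union>Q1 \<subseteq> X"
    "\<forall>x\<in>\<Union>Q1. \<forall>y\<in>\<Union>Q1. induced_edges (\<Union>Q1) EH x y \<longrightarrow> compl_edges X (induced_edges X E) (f1 x) (f1 y)"
    using X unfolding compl_contains_def contains_copy_def by blast
  obtain f2 where f2: "inj_on f2 (\<Union>Q2)" "f2 ` \<Union>Q2 \<subseteq> Y"
    "\<forall>x\<in>\<Union>Q2. \<forall>y\<in>\<Union>Q2. induced_edges (\<Union>Q2) EH x y \<longrightarrow> compl_edges Y (induced_edges Y E) (f2 x) (f2 y)"
    using Y unfolding compl_contains_def contains_copy_def by blast
  define f where "f v = (if v \<in> \<Union>Q1 then f1 v else f2 v)" for v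
  have f1_eq: "v \<in> \<Union>Q1 \<Longrightarrow> f v = f1 v" and f2_eq: "v \<in> \<Union>Q2 \<Longrightarrow> f v = f2 v" for v
    using parts_disj unfolding f_def by auto
  have fX: "f ` \<Union>Q1 \<subseteq> X" using f1(2) f1_eq by (simp add: image_subset_iff)
  have fY: "f ` \<Union>Q2 \<subseteq> Y" using f2(2) f2_eq by (simp add: image_subset_iff)
  have "inj_on f (\<Union>Q1)" using f1(1) inj_on_cong[of "\<Union>Q1" f f1] f1_eq by blast
  moreover have "inj_on f (\<Union>Q2)" using f2(1) inj_on_cong[of "\<Union>Q2" f f2] f2_eq by blast
  moreover have "f ` (\<Union>Q1 - \<Union>Q2) \<inter> f ` (\<Union>Q2 - \<Union>Q1) = {}" using fX fY disj by blast
  ultimately have inj: "inj_on f (\<Union>(Q1 \<union> Q2))" by (simp add: inj_on_Un)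
  have into: "f ` \<Union>(Q1 \<union> Q2) \<subseteq> V"
    using fX fY sub unfolding Union_Un_distrib image_Un by blast
  have edges: "compl_edges V (induced_edges V E) (f x) (f y)"
    if x: "x \<in> \<Union>(Q1 \<union> Q2)" and y: "y \<in> \<Union>(Q1 \<union> Q2)"
      and xy: "induced_edges (\<Union>(Q1 \<union> Q2)) EH x y" for x y
  proof -
    consider "x \<in> \<Union>Q1" "y \<in> \<Union>Q1" | "x \<in> \<Union>Q2" "y \<in> \<Union>Q2"
      | "x \<in> \<Union>Q1" "y \<in> \<Union>Q2" | "x \<in> \<Union>Q2" "y \<in> \<Union>Q1"
      using x y by auto
    then show ?thesis
    proof cases
      case 1
      then have "induced_edges (\<Union>Q1) EH x y" using xy by (simp add: induced_edges_def)
      then have "compl_edges X (induced_edges X E) (f1 x) (f1 y)" using f1(3) 1 by blast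
      then show ?thesis using 1 f1_eq sub unfolding compl_edges_induced_iff by auto
    next
      case 2
      then have "induced_edges (\<Union>Q2) EH x y" using xy by (simp add: induced_edges_def)
      then have "compl_edges Y (induced_edges Y E) (f2 x) (f2 y)" using f2(3) 2 by blast
      then show ?thesis using 2 f2_eq sub unfolding compl_edges_induced_iff by auto
    next
      case 3
      then have "f x \<in> X" "f y \<in> Y" using fX fY by auto
      then show ?thesis using no_edges[of "f x" "f y"] sub disj
        unfolding compl_edges_induced_iff by auto
    next
      case 4
      then have "f y \<in> X" "f x \<in> Y" using fX fY by auto
      then show ?thesis using no_edges[of "f y" "f x"] sub disj
        unfolding compl_edges_induced_iff by auto
    qed
  qed
  show ?thesis
    unfolding compl_contains_def contains_copy_def using inj into edges by blast
qed

lemma compl_contains_independent: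
  assumes "finite A" "finite X" "card A \<le> card X" and indep: "\<And>x y. x \<in> A \<Longrightarrow> y \<in> A \<Longrightarrow> \<not> EH x y"
  shows "compl_contains X E {A} EH"
proof -
  obtain B where B: "B \<subseteq> X" "card B = card A" using assms(3) obtain_subset_with_card_n by metis
  then obtain f where "bij_betw f A B"
    using assms(1,2) finite_subset by (metis finite_same_card_bij)
  then have "inj_on f A" "f ` A \<subseteq> X" using B unfolding bij_betw_def by auto
  then show ?thesis unfolding compl_contains_def contains_copy_def induced_edges_def using indep by auto
qed

lemma not_adjacent_outside_ext_nbhd:
  assumes "x \<in> X" "X \<subseteq> V" "y \<in> V - X - ext_nbhd V (induced_edges V E) X"
  shows "\<not> E x y"
  using assms unfolding ext_nbhd_def induced_edges_def by blast

lemma card_outside_ext_nbhd: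
  assumes "finite V" "X \<subseteq> V"
  shows "card V = card (V - X - ext_nbhd V (induced_edges V E) X) + card X + card (ext_nbhd V (induced_edges V E) X)"
proof -
  let ?N = "ext_nbhd V (induced_edges V E) X"
  have "?N \<subseteq> V - X" unfolding ext_nbhd_def by blast
  then have "V = (V - X - ?N) \<union> X \<union> ?N" "(V - X - ?N) \<inter> X = {}" "((V - X - ?N) \<union> X) \<inter> ?N = {}"
    using assms(2) by auto
  moreover have "finite X" "finite ?N" "finite (V - X - ?N)"
    using assms \<open>?N \<subseteq> V - X\<close> finite_subset by blast+
  ultimately show ?thesis by (metis card_Un_disjoint finite_UnI)
qed

lemma finite_ext_nbhd: "finite V \<Longrightarrow> finite (ext_nbhd V E S)"
  unfolding ext_nbhd_def by simp

lemma ext_nbhd_Un_subset: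
  assumes "A \<subseteq> V" "B \<subseteq> V - A"
  shows "ext_nbhd V (induced_edges V E) (A \<union> B)
    \<subseteq> ext_nbhd V (induced_edges V E) A \<union> ext_nbhd (V - A) (induced_edges (V - A) E) B"
  using assms unfolding ext_nbhd_def induced_edges_def by blast

section \<open>Complete multipartite graphs\<close>

lemma multipartite_adj_iff:
  "complete_multipartite VH EH P \<Longrightarrow> EH x y \<longleftrightarrow> x \<in> VH \<and> y \<in> VH \<and> (\<forall>A\<in>P. \<not> (x \<in> A \<and> y \<in> A))"
  unfolding complete_multipartite_def by simp

lemma multipartite_parts:
  assumes "complete_multipartite VH EH P"
  shows "finite P" "\<Union>P = VH" "{} \<notin> P"
  using assms unfolding complete_multipartite_def by auto

lemma multipartite_part_independent:
  "complete_multipartite VH EH P \<Longrightarrow> A \<in> P \<Longrightarrow> x \<in> A \<Longrightarrow> y \<in> A \<Longrightarrow> \<not> EH x y"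
  by (auto simp: multipartite_adj_iff)

lemma multipartite_parts_disjoint:
  "complete_multipartite VH EH P \<Longrightarrow> A \<in> P \<Longrightarrow> B \<in> P \<Longrightarrow> A \<noteq> B \<Longrightarrow> A \<inter> B = {}"
  unfolding complete_multipartite_def by blast

lemma multipartite_adj_across_parts:
  assumes H: "complete_multipartite VH EH P" and AB: "A \<in> P" "B \<in> P" "A \<noteq> B" "x \<in> A" "y \<in> B"
  shows "EH x y"
proof -
  have "\<not> (x \<in> C \<and> y \<in> C)" if "C \<in> P" for C
    using multipartite_parts_disjoint[OF H that] AB by blast
  moreover have "x \<in> VH" "y \<in> VH" using AB multipartite_parts(2)[OF H] by blast+
  ultimately show ?thesis using AB by (auto simp: multipartite_adj_iff[OF H])
qed

lemma multipartite_card_Union: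
  assumes H: "complete_multipartite VH EH P" and fin: "finite VH" and Q: "Q \<subseteq> P"
  shows "card (\<Union>Q) = (\<Sum>A\<in>Q. card A)"
proof (rule card_Union_disjoint)
  show "pairwise disjnt Q"
    using multipartite_parts_disjoint[OF H] Q unfolding pairwise_def disjnt_def by blast
  have "A \<subseteq> VH" if "A \<in> Q" for A using that Q multipartite_parts(2)[OF H] by blast
  then show "finite A" if "A \<in> Q" for A using that fin by (meson finite_subset)
qed

definition colouring :: "'a set \<Rightarrow> ('a \<Rightarrow> 'a \<Rightarrow> bool) \<Rightarrow> nat \<Rightarrow> ('a \<Rightarrow> nat) \<Rightarrow> bool" where
  "colouring V E c col \<longleftrightarrow> (\<forall>v\<in>V. col v < c) \<and> (\<forall>x\<in>V. \<forall>y\<in>V. E x y \<longrightarrow> col x \<noteq> col y)"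

lemma multipartite_colouring_exists:
  assumes H: "complete_multipartite VH EH P" and Q: "Q \<subseteq> P"
  shows "\<exists>col. colouring (\<Union>Q) (induced_edges (\<Union>Q) EH) (card Q) col"
proof -
  have "finite Q" using multipartite_parts(1)[OF H] Q by (rule finite_subset[rotated])
  then obtain g where g: "bij_betw g Q {..<card Q}"
    using ex_bij_betw_finite_nat by (metis atLeast0LessThan)
  define part where "part v = (SOME A. A \<in> Q \<and> v \<in> A)" for v
  have part: "part v \<in> Q \<and> v \<in> part v" if "v \<in> \<Union>Q" for v
    unfolding part_def by (rule someI_ex) (use that in blast)
  have "colouring (\<Union>Q) (induced_edges (\<Union>Q) EH) (card Q) (g \<circ> part)"
    unfolding colouring_def
  proof (intro conjI ballI impI)
    show "(g \<circ> part) v < card Q" if "v \<in> \<Union>Q" for v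
      using part[OF that] bij_betw_apply[OF g] by simp
    fix x y assume xy: "x \<in> \<Union>Q" "y \<in> \<Union>Q" "induced_edges (\<Union>Q) EH x y"
    show "(g \<circ> part) x \<noteq> (g \<circ> part) y"
    proof
      assume "(g \<circ> part) x = (g \<circ> part) y"
      then have "part x = part y"
        using part xy(1,2) bij_betw_imp_inj_on[OF g] by (simp add: inj_on_eq_iff)
      moreover have "part x \<in> P" "x \<in> part x" "y \<in> part y" using part xy(1,2) Q by blast+
      ultimately have "\<not> EH x y" using multipartite_part_independent[OF H] by metis
      then show False using xy(3) unfolding induced_edges_def by simp
    qed
  qed
  then show ?thesis by blast
qed

lemma multipartite_colouring_card_le:
  assumes H: "complete_multipartite VH EH P" and Q: "Q \<subseteq> P"
    and col: "colouring (\<Union>Q) (induced_edges (\<Union>Q) EH) c col"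
  shows "card Q \<le> c"
proof -
  define rep where "rep A = (SOME v. v \<in> A)" for A :: "'a set"
  have rep: "rep A \<in> A" if "A \<in> Q" for A
    unfolding rep_def using that Q multipartite_parts(3)[OF H] by (metis ex_in_conv someI_ex subsetD)
  have "inj_on (col \<circ> rep) Q"
  proof (rule inj_onI, rule ccontr)
    fix A B assume AB: "A \<in> Q" "B \<in> Q" "(col \<circ> rep) A = (col \<circ> rep) B" "A \<noteq> B"
    have "EH (rep A) (rep B)"
      using multipartite_adj_across_parts[OF H _ _ AB(4)] AB(1,2) rep Q by blast
    then have "induced_edges (\<Union>Q) EH (rep A) (rep B)"
      using AB(1,2) rep unfolding induced_edges_def by blast
    moreover have "rep A \<in> \<Union>Q" "rep B \<in> \<Union>Q" using AB(1,2) rep by blast+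
    ultimately have "col (rep A) \<noteq> col (rep B)" using col unfolding colouring_def by blast
    then show False using AB(3) by simp
  qed
  moreover have "(col \<circ> rep) ` Q \<subseteq> {..<c}" using col rep unfolding colouring_def by auto
  ultimately show ?thesis using card_inj_on_le[of "col \<circ> rep" Q "{..<c}"] by simp
qed

lemma chromatic_number_multipartite:
  assumes H: "complete_multipartite VH EH P" and Q: "Q \<subseteq> P"
  shows "chromatic_number (\<Union>Q) (induced_edges (\<Union>Q) EH) = card Q"
  unfolding chromatic_number_def colouring_def[symmetric]
  using multipartite_colouring_exists[OF H Q] multipartite_colouring_card_le[OF H Q]
  by (intro Least_equality) blast+

lemma obtain_sorted_enumeration:
  fixes Q :: "'a set" and w :: "'a \<Rightarrow> 'b::linorder"
  assumes "finite Q"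
  obtains e where "bij_betw e {..<card Q} Q" "\<And>i j. i \<le> j \<Longrightarrow> j < card Q \<Longrightarrow> w (e i) \<le> w (e j)"
proof -
  obtain xs where xs: "set xs = Q" "distinct xs" using finite_distinct_list[OF assms] by blast
  define ys where "ys = sort_key w xs"
  have ys: "set ys = Q" "distinct ys" "length ys = card Q" "sorted (map w ys)"
    unfolding ys_def using xs by (auto simp: distinct_card[symmetric])
  have "bij_betw ((!) ys) {..<card Q} Q" using ys bij_betw_nth[of ys] by (simp add: lessThan_atLeast0)
  moreover have "w (ys ! i) \<le> w (ys ! j)" if "i \<le> j" "j < card Q" for i j
    using sorted_nth_mono[OF ys(4), of i j] that ys(3) by simp
  ultimately show ?thesis using that by blast
qed

section \<open>A minimal family of parts\<close>

definition threshold :: "real \<Rightarrow> 'b set set \<Rightarrow> real" where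
  "threshold M Q = M * real (card (\<Union>Q)) * ln (real (card Q))"

text \<open>In the notation of the paper, \<open>c = \<chi>(H')\<close>, \<open>hsize = |H'|\<close> and \<open>mH = m(H')\<close>.\<close>

locale critical_family =
  fixes VG :: "'a set" and EG :: "'a \<Rightarrow> 'a \<Rightarrow> bool"
    and VH :: "'b set" and EH :: "'b \<Rightarrow> 'b \<Rightarrow> bool" and P Q :: "'b set set"
    and part :: "nat \<Rightarrow> 'b set" and V0 :: "'a set" and M \<beta> \<Delta> :: real
  assumes G: "graph VG EG" and VH_finite: "finite VH"
    and H: "complete_multipartite VH EH P"
    and Q_sub: "Q \<subseteq> P" and two_le_card_Q: "2 \<le> card Q"
    and part_bij: "bij_betw part {..<card Q} Q"
    and part_sorted: "\<And>i j. i \<le> j \<Longrightarrow> j < card Q \<Longrightarrow> card (part i) \<le> card (part j)"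
    and V0_sub: "V0 \<subseteq> VG" and V0_free: "\<not> compl_contains V0 EG Q EH"
    and card_V0: "card V0 = nat \<lfloor>threshold M Q\<rfloor>"
    and minimal: "\<And>Q' X. Q' \<subseteq> Q \<Longrightarrow> 2 \<le> card Q' \<Longrightarrow> card Q' < card Q \<Longrightarrow> X \<subseteq> VG \<Longrightarrow>
      threshold M Q' \<le> card X \<Longrightarrow> compl_contains X EG Q' EH"
    and \<beta>: "1 \<le> \<beta>" and \<Delta>: "1 \<le> \<Delta>" and M_\<beta>: "60 * \<beta> \<le> M" and \<beta>_\<Delta>: "240 * \<Delta> \<le> 60 * \<beta>"
    and M_\<beta>\<Delta>: "10 * \<beta> * \<Delta> \<le> M"
begin

abbreviation c :: nat where "c \<equiv> card Q"

definition psize :: "nat \<Rightarrow> real" where "psize i = real (card (part i))"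

definition hsize :: real where "hsize = real (card (\<Union>Q))"

definition mH :: real where "mH = hsize / c"

abbreviation nbhd :: "'a set \<Rightarrow> 'a set" where "nbhd X \<equiv> ext_nbhd V0 (induced_edges V0 EG) X"

lemma M_ge_240: "240 \<le> M" using M_\<beta> \<beta>_\<Delta> \<Delta> by linarith

lemma M_ge_2: "2 \<le> M" using M_ge_240 by simp

lemma finite_VG: "finite VG" using G unfolding graph_def by simp

lemma finite_V0: "finite V0" using V0_sub finite_VG finite_subset by blast

lemma EG_sym: "EG x y \<Longrightarrow> EG y x" using G unfolding graph_def by blast

lemma part_in_Q: "i < c \<Longrightarrow> part i \<in> Q" using part_bij by (auto dest: bij_betw_apply)

lemma part_in_P: "i < c \<Longrightarrow> part i \<in> P" using part_in_Q Q_sub by blast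

lemma finite_part: "i < c \<Longrightarrow> finite (part i)"
proof -
  assume "i < c"
  then have "part i \<subseteq> VH" using part_in_P multipartite_parts(2)[OF H] by blast
  then show ?thesis using VH_finite by (rule finite_subset)
qed

lemma psize_ge_1: "i < c \<Longrightarrow> 1 \<le> psize i"
proof -
  assume i: "i < c"
  then have "part i \<noteq> {}" using part_in_P multipartite_parts(3)[OF H] by metis
  then have "0 < card (part i)" using finite_part[OF i] by (simp add: card_gt_0_iff)
  then show ?thesis unfolding psize_def by simp
qed

lemma psize_nonneg: "0 \<le> psize i" unfolding psize_def by simp

lemma psize_mono: "i \<le> j \<Longrightarrow> j < c \<Longrightarrow> psize i \<le> psize j"
  unfolding psize_def using part_sorted by simp

lemma card_part_image: "I \<subseteq> {..<c} \<Longrightarrow> card (part ` I) = card I"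
  using part_bij by (meson bij_betw_def card_image inj_on_subset)

lemma card_Union_part_image:
  assumes "I \<subseteq> {..<c}"
  shows "real (card (\<Union>(part ` I))) = (\<Sum>i\<in>I. psize i)"
proof -
  have "part ` I \<subseteq> P" using assms part_in_Q Q_sub by blast
  then have "card (\<Union>(part ` I)) = (\<Sum>A\<in>part ` I. card A)"
    using multipartite_card_Union[OF H VH_finite] by blast
  also have "\<dots> = (\<Sum>i\<in>I. card (part i))"
    using part_bij assms by (intro sum.reindex_cong[of part]) (auto simp: bij_betw_def intro: inj_on_subset)
  finally show ?thesis unfolding psize_def by simp
qed

lemma part_image_all: "part ` {..<c} = Q" using part_bij by (simp add: bij_betw_def)

lemma hsize_eq_sum: "hsize = (\<Sum>i<c. psize i)"
  using card_Union_part_image[of "{..<c}"] unfolding hsize_def part_image_all by simp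

lemma hsize_eq_mult: "hsize = c * mH" unfolding mH_def using two_le_card_Q by simp

lemma psize_0_le_mH: "psize 0 \<le> mH"
proof -
  have "(\<Sum>i<c. psize 0) \<le> hsize" unfolding hsize_eq_sum by (intro sum_mono psize_mono) auto
  then show ?thesis unfolding mH_def using two_le_card_Q by (simp add: field_simps)
qed

lemma one_le_mH: "1 \<le> mH" using psize_0_le_mH psize_ge_1[of 0] two_le_card_Q by simp

lemma threshold_Q: "threshold M Q = M * hsize * ln c" unfolding threshold_def hsize_def ..

lemma Union_part_image_disjoint:
  assumes I: "I \<subseteq> {..<c}" and J: "J \<subseteq> {..<c}" and IJ: "I \<inter> J = {}"
  shows "\<Union>(part ` I) \<inter> \<Union>(part ` J) = {}"
proof -
  have "part i \<inter> part j = {}" if ij: "i \<in> I" "j \<in> J" for i j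
  proof -
    have "i \<noteq> j" "i < c" "j < c" using ij I J IJ by auto
    then have "part i \<noteq> part j"
      using inj_on_eq_iff[OF bij_betw_imp_inj_on[OF part_bij], of i j] by simp
    then show ?thesis
      using multipartite_parts_disjoint[OF H part_in_P part_in_P] \<open>i < c\<close> \<open>j < c\<close> by blast
  qed
  then show ?thesis by blast
qed

lemma copy_of_parts:
  assumes I: "I \<subseteq> {..<c}" "I \<noteq> {}" "card I < c" and X: "X \<subseteq> VG"
    and size: "(\<Sum>i\<in>I. psize i) \<le> card X" "M * (\<Sum>i\<in>I. psize i) * ln (card I) \<le> card X"
  shows "compl_contains X EG (part ` I) EH"
proof (cases "card I = 1")
  case True
  then obtain i where i: "I = {i}" by (meson card_1_singletonE)
  then have "i < c" using I(1) by blast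
  have "card (part i) \<le> card X" using size(1) unfolding i psize_def by simp
  then have "compl_contains X EG {part i} EH"
    using finite_part[OF \<open>i < c\<close>] X finite_VG finite_subset
      multipartite_part_independent[OF H part_in_P[OF \<open>i < c\<close>]]
    by (intro compl_contains_independent) auto
  then show ?thesis unfolding i by simp
next
  case False
  have "finite I" using I(1) finite_subset by blast
  then have "card I \<noteq> 0" using I(2) by simp
  then have "2 \<le> card (part ` I)" using False card_part_image[OF I(1)] by linarith
  moreover have "part ` I \<subseteq> Q" using I(1) part_in_Q by blast
  moreover have "card (part ` I) < c" using I(3) card_part_image[OF I(1)] by simp
  moreover have "threshold M (part ` I) \<le> card X"
    using size(2) card_Union_part_image[OF I(1)] card_part_image[OF I(1)] unfolding threshold_def by simp
  ultimately show ?thesis using minimal X by blast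
qed

lemma no_split_copy:
  assumes X: "X \<subseteq> V0" and Y: "Y \<subseteq> V0" and XY: "X \<inter> Y = {}"
    and no_edges: "\<And>x y. x \<in> X \<Longrightarrow> y \<in> Y \<Longrightarrow> \<not> EG x y" and j: "j \<le> c"
    and copy_X: "compl_contains X EG (part ` {..<j}) EH"
    and copy_Y: "compl_contains Y EG (part ` {j..<c}) EH"
  shows False
proof -
  have "\<not> EG x y \<and> \<not> EG y x" if "x \<in> X" "y \<in> Y" for x y
    using no_edges[OF that] EG_sym by blast
  moreover have "\<Union>(part ` {..<j}) \<inter> \<Union>(part ` {j..<c}) = {}"
    using j by (intro Union_part_image_disjoint) auto
  ultimately have "compl_contains V0 EG (part ` {..<j} \<union> part ` {j..<c}) EH"
    using compl_contains_Un[OF XY X Y _ copy_X copy_Y] by blast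
  moreover have "{..<j} \<union> {j..<c} = {..<c}" using j by auto
  then have "part ` {..<j} \<union> part ` {j..<c} = Q" using part_image_all by (metis image_Un)
  ultimately show False using V0_free by simp
qed

lemma card_V0_bounds: "M * hsize * ln c - 1 < card V0" "card V0 \<le> M * hsize * ln c"
proof -
  have "0 \<le> M * hsize * ln c"
    using M_ge_240 two_le_card_Q unfolding hsize_def by simp
  then have "real (card V0) = \<lfloor>M * hsize * ln c\<rfloor>"
    unfolding card_V0 threshold_Q by simp
  then show "M * hsize * ln c - 1 < card V0" "card V0 \<le> M * hsize * ln c"
    by linarith+
qed

lemma medium_sets_expand:
  assumes Z: "Z \<subseteq> V0" "psize 0 \<le> card Z" "card Z \<le> (1 + \<beta>) * mH"
  shows "\<Delta> * card Z < card (nbhd Z)"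
proof (rule ccontr)
  assume "\<not> ?thesis"
  define W where "W = V0 - Z - nbhd Z"
  have "card V0 = card W + card Z + card (nbhd Z)"
    unfolding W_def using card_outside_ext_nbhd[OF finite_V0 Z(1)] .
  with \<open>\<not> ?thesis\<close> have W_large: "card V0 - (1 + \<Delta>) * card Z \<le> card W"
    by (simp add: algebra_simps)
  have rest: "(\<Sum>i\<in>{1..<c}. psize i) = hsize - psize 0"
    using two_le_card_Q hsize_eq_sum by (simp add: lessThan_atLeast0 sum.atLeast_Suc_lessThan)
  note room = room_after_smallest_part[OF two_le_card_Q \<beta> \<Delta> M_\<beta> \<beta>_\<Delta> M_\<beta>\<Delta> one_le_mH hsize_eq_mult
      psize_nonneg[of 0] card_V0_bounds(1) of_nat_0_le_iff Z(3)]
  have W_sub: "W \<subseteq> V0" "Z \<inter> W = {}" unfolding W_def by auto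
  have copy_Z: "compl_contains Z EG (part ` {..<1}) EH"
  proof (rule copy_of_parts)
    show "(\<Sum>i<1. psize i) \<le> card Z" "M * (\<Sum>i<1. psize i) * ln (card {..<1::nat}) \<le> card Z"
      using Z(2) by simp_all
  qed (use Z(1) two_le_card_Q V0_sub in auto)
  have copy_W: "compl_contains W EG (part ` {1..<c}) EH"
  proof (rule copy_of_parts)
    show "(\<Sum>i\<in>{1..<c}. psize i) \<le> card W"
      using rest room(1) W_large psize_nonneg[of 0] by linarith
    have "real (card {1..<c}) = real c - 1" using two_le_card_Q by (simp add: of_nat_diff)
    then have "M * (\<Sum>i\<in>{1..<c}. psize i) * ln (card {1..<c}) = M * (hsize - psize 0) * ln (real c - 1)"
      using rest by simp
    then show "M * (\<Sum>i\<in>{1..<c}. psize i) * ln (card {1..<c}) \<le> card W"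
      using room(2) W_large by linarith
  qed (use two_le_card_Q V0_sub W_sub in auto)
  have no_edges: "\<not> EG x y" if "x \<in> Z" "y \<in> W" for x y
    using not_adjacent_outside_ext_nbhd[OF that(1) Z(1)] that(2) unfolding W_def by blast
  show False
    using no_split_copy[OF Z(1) W_sub no_edges _ copy_Z copy_W] two_le_card_Q by simp
qed

definition sparse :: "'a set \<Rightarrow> bool" where
  "sparse X \<longleftrightarrow> X \<subseteq> V0 \<and> card X < card (part 0) \<and> card (nbhd X) \<le> \<Delta> * card X"

definition removed :: "'a set" where
  "removed = (SOME S. sparse S \<and> (\<forall>X. sparse X \<longrightarrow> card X \<le> card S))"

definition core :: "'a set" where "core = V0 - removed"

lemma removed: "sparse removed" "\<And>X. sparse X \<Longrightarrow> card X \<le> card removed"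
proof -
  have "sparse {}" unfolding sparse_def using finite_part[of 0] psize_ge_1[of 0] two_le_card_Q
    by (simp add: psize_def ext_nbhd_def)
  moreover have "\<forall>X. sparse X \<longrightarrow> card X < card (part 0)" unfolding sparse_def by simp
  ultimately have "\<exists>S. sparse S \<and> (\<forall>X. sparse X \<longrightarrow> card X \<le> card S)"
    using ex_has_greatest_nat[of sparse "{}" card "card (part 0)"] by blast
  then have "sparse removed \<and> (\<forall>X. sparse X \<longrightarrow> card X \<le> card removed)"
    unfolding removed_def by (rule someI_ex)
  then show "sparse removed" "\<And>X. sparse X \<Longrightarrow> card X \<le> card removed" by blast+
qed

lemma card_removed_le: "card removed \<le> mH - 1"
proof -
  have "card removed + 1 \<le> card (part 0)" using removed(1) unfolding sparse_def by simp
  then show ?thesis using psize_0_le_mH unfolding psize_def by linarith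
qed

lemma core_sub: "core \<subseteq> V0" unfolding core_def by blast

lemma finite_core: "finite core" using core_sub finite_V0 finite_subset by blast

lemma card_core_bounds: "M * hsize * ln c - mH \<le> card core" "card core \<le> M * hsize * ln c"
proof -
  have "removed \<subseteq> V0" using removed(1) unfolding sparse_def by simp
  then have "real (card core) = card V0 - card removed"
    unfolding core_def using finite_V0 by (simp add: card_Diff_subset card_mono finite_subset of_nat_diff)
  then show "M * hsize * ln c - mH \<le> card core" "card core \<le> M * hsize * ln c"
    using card_V0_bounds card_removed_le by linarith+
qed

lemma core_free: "\<not> compl_contains core EG Q EH"
  using compl_contains_mono[OF core_sub] V0_free by blast

lemma small_sets_expand:
  assumes S: "S \<subseteq> core" "card S \<le> \<beta> * mH"
  shows "\<Delta> * card S \<le> card (ext_nbhd core (induced_edges core EG) S \<inter> core)"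
proof (rule ccontr)
  let ?N = "ext_nbhd core (induced_edges core EG) S"
  assume "\<not> ?thesis"
  moreover have "?N \<inter> core = ?N" unfolding ext_nbhd_def by blast
  ultimately have N_small: "card ?N < \<Delta> * card S" by simp
  then have "S \<noteq> {}" by auto
  have removed_sub: "removed \<subseteq> V0" using removed(1) unfolding sparse_def by simp
  have S_sub: "S \<subseteq> V0 - removed" using S(1) unfolding core_def .
  define Z where "Z = removed \<union> S"
  have Z_sub: "Z \<subseteq> V0" unfolding Z_def using removed_sub S_sub by blast
  have "finite S" "finite removed" using S_sub removed_sub finite_V0 finite_subset by blast+
  then have card_Z: "card Z = card removed + card S"
    unfolding Z_def using S_sub by (intro card_Un_disjoint) auto
  have "nbhd Z \<subseteq> nbhd removed \<union> ?N"
    unfolding Z_def core_def by (rule ext_nbhd_Un_subset[OF removed_sub S_sub])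
  then have "card (nbhd Z) \<le> card (nbhd removed \<union> ?N)"
    using finite_ext_nbhd[OF finite_V0] finite_ext_nbhd[OF finite_core] by (intro card_mono) auto
  also have "\<dots> \<le> card (nbhd removed) + card ?N" by (rule card_Un_le)
  finally have "real (card (nbhd Z)) \<le> card (nbhd removed) + card ?N" by linarith
  then have Z_sparse_nbhd: "card (nbhd Z) \<le> \<Delta> * card Z"
    using removed(1) N_small card_Z unfolding sparse_def by (simp add: algebra_simps)
  have "card removed < card Z" using card_Z \<open>S \<noteq> {}\<close> \<open>finite S\<close> by (simp add: card_gt_0_iff)
  then have "\<not> sparse Z" using removed(2) by fastforce
  then have "psize 0 \<le> card Z" using Z_sub Z_sparse_nbhd unfolding sparse_def psize_def by simp
  moreover have "card Z \<le> (1 + \<beta>) * mH" using card_Z card_removed_le S(2) by (simp add: algebra_simps)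
  ultimately show False using medium_sets_expand[OF Z_sub] Z_sparse_nbhd by linarith
qed

lemma mH_mult_le_suffix:
  assumes "j \<le> c"
  shows "mH * (c - j) \<le> (\<Sum>i\<in>{j..<c}. psize i)"
proof (cases "j = c")
  case False
  define p where "p = (\<Sum>i<j. psize i)"
  define R where "R = (\<Sum>i\<in>{j..<c}. psize i)"
  have "hsize = p + R"
    unfolding hsize_eq_sum p_def R_def using assms by (metis sum.atLeastLessThan_concat lessThan_atLeast0 zero_le)
  have "p \<le> j * psize j"
    unfolding p_def using sum_mono[of "{..<j}" psize "\<lambda>_. psize j"] psize_mono assms False by simp
  moreover have "(c - j) * psize j \<le> R"
    unfolding R_def using sum_mono[of "{j..<c}" "\<lambda>_. psize j" psize] psize_mono by simp
  ultimately have "p * (c - j) \<le> j * R"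
    using assms by (smt (verit, best) mult.commute mult.left_commute mult_left_mono of_nat_0_le_iff)
  then have "hsize * (c - j) \<le> c * R"
    unfolding \<open>hsize = p + R\<close> using assms by (simp add: algebra_simps of_nat_diff)
  then show ?thesis unfolding mH_def R_def using two_le_card_Q by (simp add: field_simps)
qed simp

lemma suffix_room:
  assumes j: "1 \<le> j" "j < c" and s: "0 \<le> s" "s \<le> F / 2" and F: "M * hsize * ln c - mH \<le> F"
    and jmax: "j + 1 < c \<Longrightarrow> s < M * (\<Sum>i<j + 1. psize i) * ln (j + 1)"
  shows "(\<Sum>i\<in>{j..<c}. psize i) \<le> F - (1 + 1 / (10 * ln c)) * s"
    and "M * (\<Sum>i\<in>{j..<c}. psize i) * ln (card {j..<c}) \<le> F - (1 + 1 / (10 * ln c)) * s"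
proof -
  define R where "R = (\<Sum>i\<in>{j..<c}. psize i)"
  define room where "room = F - (1 + 1 / (10 * ln c)) * s"
  have "R \<le> room \<and> M * R * ln (card {j..<c}) \<le> room"
  proof (cases "j + 1 = c")
    case True
    then have "{j..<c} = {j}" by auto
    moreover have "psize j \<le> hsize"
      unfolding hsize_eq_sum using j psize_nonneg by (intro member_le_sum) auto
    moreover have "hsize \<le> room"
      unfolding room_def using two_le_card_Q one_le_mH hsize_eq_mult
      by (intro room_for_last_part[OF M_ge_240 _ _ _ F s(2) s(1)]) (auto intro: mult_right_mono)
    ultimately show ?thesis unfolding R_def using psize_nonneg[of j] by simp
  next
    case False
    define r where "r = c - j"
    have r: "2 \<le> r" "j + r = c" unfolding r_def using j False by auto
    have "hsize = (\<Sum>i<j. psize i) + R"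
      unfolding hsize_eq_sum R_def using j
      by (metis sum.atLeastLessThan_concat lessThan_atLeast0 zero_le less_imp_le)
    then have F': "M * ((\<Sum>i<j. psize i) + R) * ln (real (j + r)) - mH \<le> F"
      using F r(2) by simp
    have rb: "real r * psize j \<le> R"
      unfolding R_def r_def using sum_mono[of "{j..<c}" "\<lambda>_. psize j" psize] psize_mono by simp
    have dr: "mH * real r \<le> R"
      unfolding R_def r_def using mH_mult_le_suffix[of j] j by (simp add: of_nat_diff)
    have "s < M * ((\<Sum>i<j. psize i) + psize j) * ln (real j + 1)"
      using jmax j False by (simp add: add.commute)
    from room_for_suffix[OF j(1) r(1) M_ge_240 sum_nonneg[OF psize_nonneg] psize_nonneg rb
        _ dr F' s(2) this]
    have "M * R * ln r \<le> room"
      unfolding room_def r(2) using one_le_mH by simp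
    moreover have "R \<le> M * R * ln r"
      unfolding R_def using r M_ge_240 by (intro le_mult_ln sum_nonneg psize_nonneg) auto
    ultimately show ?thesis unfolding r_def by simp
  qed
  then show "(\<Sum>i\<in>{j..<c}. psize i) \<le> F - (1 + 1 / (10 * ln c)) * s"
    and "M * (\<Sum>i\<in>{j..<c}. psize i) * ln (card {j..<c}) \<le> F - (1 + 1 / (10 * ln c)) * s"
    unfolding R_def room_def by auto
qed

lemma large_sets_expand:
  assumes S: "S \<subseteq> core" "\<beta> * mH \<le> card S" "card S \<le> card core / 2"
  shows "card S / (10 * ln c) \<le> card (ext_nbhd core (induced_edges core EG) S)"
proof (rule ccontr)
  let ?N = "ext_nbhd core (induced_edges core EG) S"
  define W where "W = core - S - ?N"
  assume "\<not> ?thesis"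
  moreover have "card core = card W + card S + card ?N"
    unfolding W_def using card_outside_ext_nbhd[OF finite_core S(1)] .
  ultimately have W_large: "card core - (1 + 1 / (10 * ln c)) * card S \<le> card W"
    by (simp add: algebra_simps)
  have W_sub: "W \<subseteq> V0" "S \<inter> W = {}" unfolding W_def using core_sub by auto
  have S_sub: "S \<subseteq> V0" using S(1) core_sub by blast
  have no_edges: "\<not> EG x y" if "x \<in> S" "y \<in> W" for x y
    using not_adjacent_outside_ext_nbhd[OF that(1) S(1)] that(2) unfolding W_def by blast
  have "1 * mH \<le> \<beta> * mH" using \<beta> one_le_mH by (intro mult_right_mono) auto
  then have p0: "psize 0 \<le> card S" using psize_0_le_mH S(2) by linarith
  obtain j where j: "1 \<le> j" "j < c"
    and prefix: "(\<Sum>i<j. psize i) \<le> card S" "M * (\<Sum>i<j. psize i) * ln j \<le> card S"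
    and jmax: "j + 1 < c \<Longrightarrow> card S < M * (\<Sum>i<j + 1. psize i) * ln (j + 1)"
    using largest_fitting_prefix[of c psize "card S" M, OF two_le_card_Q p0 M_ge_2 psize_nonneg]
    by blast
  have copy_S: "compl_contains S EG (part ` {..<j}) EH"
  proof (rule copy_of_parts)
    show "M * (\<Sum>i<j. psize i) * ln (card {..<j}) \<le> card S" using prefix(2) by simp
  qed (use j prefix(1) S_sub V0_sub in \<open>auto simp: lessThan_empty_iff\<close>)
  have copy_W: "compl_contains W EG (part ` {j..<c}) EH"
  proof (rule copy_of_parts)
    note room = suffix_room[OF j of_nat_0_le_iff S(3) card_core_bounds(1) jmax]
    show "(\<Sum>i\<in>{j..<c}. psize i) \<le> card W" using room(1) W_large by linarith
    show "M * (\<Sum>i\<in>{j..<c}. psize i) * ln (card {j..<c}) \<le> card W" using room(2) W_large by linarith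
  qed (use j W_sub V0_sub in auto)
  show False using no_split_copy[OF S_sub W_sub no_edges _ copy_S copy_W] j by simp
qed

lemma core_expanding: "expanding core (induced_edges core EG) \<Delta> \<beta> mH c"
  unfolding expanding_def expands_into_def using small_sets_expand large_sets_expand by blast

lemma chromatic_number_Q: "chromatic_number (\<Union>Q) (induced_edges (\<Union>Q) EH) = c"
  by (rule chromatic_number_multipartite[OF H Q_sub])

lemma mratio_Q: "mratio (\<Union>Q) (induced_edges (\<Union>Q) EH) = mH"
  unfolding mratio_def chromatic_number_Q mH_def hsize_def ..

end

lemma obtain_critical_family:
  assumes G: "graph VG EG" and VH: "finite VH" and H: "complete_multipartite VH EH P"
    and P: "2 \<le> card P" and U_P: "U_P \<subseteq> VG" "\<not> compl_contains U_P EG P EH" "threshold M P \<le> card U_P"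
    and params: "1 \<le> \<beta>" "1 \<le> \<Delta>" "60 * \<beta> \<le> M" "240 * \<Delta> \<le> 60 * \<beta>" "10 * \<beta> * \<Delta> \<le> M"
  obtains Q part V0 where "critical_family VG EG VH EH P Q part V0 M \<beta> \<Delta>"
proof -
  define good where "good Q \<longleftrightarrow> Q \<subseteq> P \<and> 2 \<le> card Q \<and>
    (\<exists>U\<subseteq>VG. \<not> compl_contains U EG Q EH \<and> threshold M Q \<le> card U)" for Q
  have "good P" unfolding good_def using P U_P by blast
  then obtain Q where "good Q" and least: "\<And>Q'. good Q' \<Longrightarrow> card Q \<le> card Q'"
    using ex_has_least_nat[of good P card] by blast
  then obtain U where U: "Q \<subseteq> P" "2 \<le> card Q" "U \<subseteq> VG" "\<not> compl_contains U EG Q EH"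
    "threshold M Q \<le> card U" unfolding good_def by blast
  have "nat \<lfloor>threshold M Q\<rfloor> \<le> card U" using U(5) by (simp add: nat_le_iff floor_le_iff)
  then obtain V0 where V0: "V0 \<subseteq> U" "card V0 = nat \<lfloor>threshold M Q\<rfloor>"
    by (rule obtain_subset_with_card_n)
  have "finite Q" using multipartite_parts(1)[OF H] U(1) by (rule finite_subset[rotated])
  then obtain part where part: "bij_betw part {..<card Q} Q"
    "\<And>i j. i \<le> j \<Longrightarrow> j < card Q \<Longrightarrow> card (part i) \<le> card (part j)"
    using obtain_sorted_enumeration[of Q card] by blast
  have minimal: "compl_contains X EG Q' EH"
    if "Q' \<subseteq> Q" "2 \<le> card Q'" "card Q' < card Q" "X \<subseteq> VG" "threshold M Q' \<le> card X" for Q' X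
  proof (rule ccontr)
    assume "\<not> compl_contains X EG Q' EH"
    then have "good Q'" unfolding good_def using that U(1) by blast
    then show False using least[of Q'] that(3) by simp
  qed
  have "V0 \<subseteq> VG" using V0(1) U(3) by blast
  moreover have "\<not> compl_contains V0 EG Q EH" using compl_contains_mono[OF V0(1)] U(4) by blast
  ultimately have "critical_family VG EG VH EH P Q part V0 M \<beta> \<Delta>"
    using G VH H U(1,2) part V0(2) minimal params by unfold_locales
  then show ?thesis by (rule that)
qed

theorem lemma4p2:
  fixes VH :: "'b set" and EH :: "'b \<Rightarrow> 'b \<Rightarrow> bool" and P :: "'b set set"
    and VG :: "'a set" and EG :: "'a \<Rightarrow> 'a \<Rightarrow> bool"
    and k :: nat and m \<beta> M \<Delta> :: real
  assumes k: "k \<ge> 2"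
    and H: "graph VH EH" "complete_multipartite VH EH P" "card P = k"
    and m_def: "m = real (card VH) / real k"
    and params: "\<beta> \<ge> 1" "M \<ge> 1" "\<Delta> \<ge> 1" "M \<ge> 60 * \<beta>" "60 * \<beta> \<ge> 240 * \<Delta>"
      "M \<ge> 10 * \<beta> * \<Delta>" "M \<ge> 4 * real k" "\<beta> \<ge> 10 * ln (real k)"
    and G: "graph VG EG"
    and free: "H_free VG (compl_edges VG EG) VH EH"
    and size: "real (card VG) \<ge> M * m * real k * ln (real k)"
  shows "\<exists>Q U. Q \<subseteq> P \<and> card Q \<ge> 2 \<and> U \<subseteq> VG \<and>
     (let VH' = \<Union>Q; EH' = induced_edges (\<Union>Q) EH;
          EF = induced_edges U EG;
          c = chromatic_number VH' EH' in
       H_free U (compl_edges U EF) VH' EH' \<and>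
       M * real (card VH') * ln (real c) - mratio VH' EH' \<le> real (card U) \<and>
       real (card U) \<le> M * real (card VH') * ln (real c) \<and>
       expanding U EF \<Delta> \<beta> (mratio VH' EH') c)"
proof -
  have "induced_edges (\<Union>P) EH = EH" "induced_edges VG EG = EG"
    using H(1) G multipartite_parts(2)[OF H(2)] unfolding graph_def by (auto intro: induced_edges_all)
  then have "\<not> compl_contains VG EG P EH"
    using free multipartite_parts(2)[OF H(2)] unfolding compl_contains_def H_free_def by simp
  moreover have "threshold M P \<le> card VG"
    unfolding threshold_def m_def H(3) multipartite_parts(2)[OF H(2)] using k size m_def by simp
  moreover have "finite VH" "2 \<le> card P" using H(1,3) k unfolding graph_def by simp_all
  ultimately obtain Q part V0 where "critical_family VG EG VH EH P Q part V0 M \<beta> \<Delta>"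
    using obtain_critical_family[OF G _ H(2) _ subset_refl _ _ params(1,3-6)] by blast
  then interpret critical_family VG EG VH EH P Q part V0 M \<beta> \<Delta> .
  show ?thesis
    unfolding Let_def
  proof (intro exI[of _ Q] exI[of _ core] conjI)
    show "core \<subseteq> VG" using core_sub V0_sub by blast
    show "H_free core (compl_edges core (induced_edges core EG)) (\<Union>Q) (induced_edges (\<Union>Q) EH)"
      using core_free unfolding H_free_def compl_contains_def .
  qed (use Q_sub two_le_card_Q core_expanding card_core_bounds[unfolded hsize_def]
      in \<open>auto simp: chromatic_number_Q mratio_Q\<close>)
qed

end
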